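(* Let $\mu$ be a partition of $n$ and consider its modified GP-tree. Every filling at Level 0 is a row-strict filling of $\mu$, and for each Level 0 filling $T$, $\Phi(T)$ equals the monomial labelling the Level B leaf below $T$.
   Context: Compositions: sequences of nonnegative integers summing to $n$, drawn with $\rho_k$ left-justified boxes in row $k$ (rows top to bottom). Row-strict filling: bijective placement of $1,\dots,n$ with entries increasing left to right in rows. Dimension-ordering of a composition with $r$ nonzero rows: label the far-right boxes of nonzero rows $1,\dots,r$, ordering them by column from rightmost to leftmost, and within a column top to bottom. Modified GP-tree of $\mu$: Level $n$ has the single vertex $\mu$ with no boxes filled. A vertex at Level $i$ ($1\le i\le n$) is $\mu$ with the values $i+1,\dots,n$ placed in some boxes, such that the unfilled boxes in each row form an initial (leftmost) segment, i.e. the unfilled boxes form a composition $\mu^{(i)}$ of $i$. If $\mu^{(i)}$ has $r$ nonzero rows, the vertex has $r$ children at Level $i-1$, joined by edges labelled $x_i^0,x_i^1,\dots,x_i^{r-1}$ (left to right); the child along edge $x_i^j$ is obtained by imposing the dimension-ordering on $\mu^{(i)}$ and placing the value $i$ into the unfilled box with label $j+1$. Level 0 thus consists of complete fillings of $\mu$; each Level 0 vertex has a unique child leaf at Level B joined by an edge labelled $1$, and each leaf is labelled by the product of all edge labels on the path from the root. Dimension pairs (with $h(j)=j$): $(a,b)$ is a dimension pair of a filling $T$ if $b>a$; $b$ lies in the same column as $a$ strictly below it or in a column strictly left of $a$'s; and if a box immediately right of $a$ contains $c$, then $b\le c$. $\Phi(T)=\prod_{j=2}^n x_j^{|D^T_j|}$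 where $D^T_j$ is the set of dimension pairs $(a,j)$. *)

theory Defs
  imports Main
begin

text \<open>A composition/partition is a list of row lengths, rows listed top to
bottom (row index 0 is the top row). Boxes are pairs (row, column), 0-indexed, columns
left to right. A (partial) filling is a function on pairs; the value 0 means "unfilled"
(and boxes outside the diagram are always 0). A monomial in the variables x_1, x_2, ...
is represented by its exponent vector of type nat => nat.\<close>

definition is_partition :: "nat list \<Rightarrow> nat \<Rightarrow> bool" where
  "is_partition \<mu> n \<longleftrightarrow> sorted_wrt (\<ge>) \<mu> \<and> (\<forall>p\<in>set \<mu>. 0 < p) \<and> sum_list \<mu> = n"

definition boxes :: "nat list \<Rightarrow> (nat \<times> nat) set" where
  "boxes \<mu> = {(r, c). r < length \<mu> \<and> c < \<mu> ! r}"

definition row_strict :: "nat list \<Rightarrow> nat \<Rightarrow> (nat \<times> nat \<Rightarrow> nat) \<Rightarrow> bool" where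
  "row_strict \<mu> n T \<longleftrightarrow> bij_betw T (boxes \<mu>) {1..n} \<and>
     (\<forall>r c. (r, c) \<in> boxes \<mu> \<longrightarrow> (r, Suc c) \<in> boxes \<mu> \<longrightarrow> T (r, c) < T (r, Suc c))"

definition unfilled_shape :: "nat list \<Rightarrow> (nat \<times> nat \<Rightarrow> nat) \<Rightarrow> nat list" where
  "unfilled_shape \<mu> T = map (\<lambda>k. card {c. c < \<mu> ! k \<and> T (k, c) = 0}) [0..<length \<mu>]"

text \<open>Dimension ordering of a composition \<rho>: the list of nonzero rows k (whose far-right
box lies in column \<rho>!k - 1), ordered by column from rightmost to leftmost and within a
column from top to bottom. The row at list position j carries label j+1.\<close>
definition dim_order :: "nat list \<Rightarrow> nat list" where
  "dim_order \<rho> = concat (map (\<lambda>c. filter (\<lambda>k. \<rho> ! k = Suc c) [0..<length \<rho>])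
                                (rev [0..<fold max \<rho> 0]))"

text \<open>Vertices of the modified GP-tree of \<mu>: gp_vertex \<mu> i T e means that there is a
vertex at Level i with (partial) filling T, reached from the root along a path whose
edge labels multiply to the monomial with exponent vector e.\<close>
inductive gp_vertex :: "nat list \<Rightarrow> nat \<Rightarrow> (nat \<times> nat \<Rightarrow> nat) \<Rightarrow> (nat \<Rightarrow> nat) \<Rightarrow> bool"
  for \<mu> :: "nat list" where
  root: "gp_vertex \<mu> (sum_list \<mu>) (\<lambda>_. 0) (\<lambda>_. 0)"
| step: "gp_vertex \<mu> (Suc i) T e \<Longrightarrow>
         j < length (dim_order (unfilled_shape \<mu> T)) \<Longrightarrow>
         k = dim_order (unfilled_shape \<mu> T) ! j \<Longrightarrow>
         gp_vertex \<mu> i (T((k, unfilled_shape \<mu> T ! k - 1) := Suc i)) (e(Suc i := j))"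

text \<open>Leaf at Level B below a Level 0 vertex: joined by an edge labelled 1, so its
label is the product of the edge labels on the path to the Level 0 vertex.\<close>
definition gp_leaf :: "nat list \<Rightarrow> (nat \<times> nat \<Rightarrow> nat) \<Rightarrow> (nat \<Rightarrow> nat) \<Rightarrow> bool" where
  "gp_leaf \<mu> T m \<longleftrightarrow> gp_vertex \<mu> 0 T m"

definition dim_pairs_with :: "nat list \<Rightarrow> (nat \<times> nat \<Rightarrow> nat) \<Rightarrow> nat \<Rightarrow> nat set" where
  "dim_pairs_with \<mu> T b = {a. \<exists>p\<in>boxes \<mu>. \<exists>q\<in>boxes \<mu>. T p = a \<and> T q = b \<and> a < b \<and>
       ((snd q = snd p \<and> fst p < fst q) \<or> snd q < snd p) \<and>
       ((fst p, Suc (snd p)) \<in> boxes \<mu> \<longrightarrow> b \<le> T (fst p, Suc (snd p)))}"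

definition Phi :: "nat list \<Rightarrow> nat \<Rightarrow> (nat \<times> nat \<Rightarrow> nat) \<Rightarrow> nat \<Rightarrow> nat" where
  "Phi \<mu> n T j = (if 2 \<le> j \<and> j \<le> n then card (dim_pairs_with \<mu> T j) else 0)"

end

theory Submission
  imports Defs
begin

(* Follow the modified GP-tree from the root down and maintain two invariants
   for a vertex T at Level i with path monomial e:
   (1) T is a partial filling (partial_filling): the values i+1, ..., n sit bijectively in
       boxes of \<mu>, the unfilled boxes of each row form an initial segment, and filled
       entries increase along rows;
   (2) for every placed value b > i, the exponent e b equals the number of dimension
       partners a < b of b in T (exponents_count_dim_pairs), where unfilled boxes count as 0.
   For (2) the crucial observation is that when i+1 is placed along the edge x_{i+1}^j into
   row k, its partners are exactly the last unfilled boxes of the rows preceding k in the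
   dimension ordering (dim_boxes_placed_value), and there are exactly j of them
   (card_dim_before); partners of larger values are unaffected.  At Level 0 invariant (1)
   says T is row-strict and invariant (2) says e is the exponent vector of \<Phi>(T). *)

definition dim_before :: "nat list \<Rightarrow> nat \<Rightarrow> nat \<Rightarrow> bool" where
  "dim_before \<rho> k k' \<longleftrightarrow> \<rho> ! k' < \<rho> ! k \<or> (\<rho> ! k = \<rho> ! k' \<and> k < k')"

lemma dim_before_asym: "dim_before \<rho> k k' \<Longrightarrow> \<not> dim_before \<rho> k' k"
  by (auto simp: dim_before_def)

lemma fold_max_bounds:
  fixes a :: nat
  shows "a \<le> fold max xs a" and "x \<in> set xs \<Longrightarrow> x \<le> fold max xs a"
  by (induction xs arbitrary: a)
    (auto intro: order_trans[OF max.cobounded1] order_trans[OF max.cobounded2])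

lemma dim_order_set: "set (dim_order \<rho>) = {k. k < length \<rho> \<and> 0 < \<rho> ! k}"
proof -
  have "\<And>k. k < length \<rho> \<Longrightarrow> \<rho> ! k \<le> fold max \<rho> 0"
    by (rule fold_max_bounds(2)) simp
  then show ?thesis unfolding dim_order_def
    by (auto simp: gr0_conv_Suc) (metis Suc_le_lessD)
qed

lemma dim_order_sorted: "sorted_wrt (dim_before \<rho>) (dim_order \<rho>)"
proof -
  have "sorted_wrt (dim_before \<rho>) (concat (map (\<lambda>c. filter (\<lambda>k. \<rho> ! k = Suc c) [0..<length \<rho>]) cs))"
    if "sorted_wrt (>) cs" for cs
    using that
  proof (induction cs)
    case (Cons c cs)
    have "sorted_wrt (dim_before \<rho>) (filter (\<lambda>k. \<rho> ! k = Suc c) [0..<length \<rho>])"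
      by (rule sorted_wrt_mono_rel[OF _ sorted_wrt_filter[OF sorted_wrt_upt]])
        (auto simp: dim_before_def)
    with Cons show ?case by (simp add: sorted_wrt_append) (auto simp: dim_before_def)
  qed simp
  then show ?thesis unfolding dim_order_def by (simp add: sorted_wrt_rev)
qed

lemma sorted_wrt_card_before:
  assumes sorted: "sorted_wrt R xs" and asym: "\<And>x y. R x y \<Longrightarrow> \<not> R y x"
    and j: "j < length xs"
  shows "card {x \<in> set xs. R x (xs ! j)} = j"
proof -
  have dist: "distinct xs"
    using sorted asym by (induction xs) auto
  have before: "R (xs ! i) (xs ! j) \<longleftrightarrow> i < j" if "i < length xs" for i
    using sorted_wrt_nth_less[OF sorted] asym that j by (metis linorder_neqE_nat)
  have "{x \<in> set xs. R x (xs ! j)} = (!) xs ` {..<j}"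
    using j by (auto simp: in_set_conv_nth before) (use less_trans in blast)
  moreover have "inj_on ((!) xs) {..<j}"
    using dist j by (intro inj_on_nth) auto
  ultimately show ?thesis by (simp add: card_image)
qed

(* Hence the row carrying label j+1 in the dimension ordering is preceded by exactly j rows;
   this is the source of the exponent j of the edge label x_i^j. *)
lemma card_dim_before:
  assumes "j < length (dim_order \<rho>)"
  shows "card {k \<in> set (dim_order \<rho>). dim_before \<rho> k (dim_order \<rho> ! j)} = j"
  using sorted_wrt_card_before[OF dim_order_sorted dim_before_asym assms] .

lemma mem_dim_order_unfilled_shape:
  "r \<in> set (dim_order (unfilled_shape \<mu> T)) \<longleftrightarrow> r < length \<mu> \<and> 0 < unfilled_shape \<mu> T ! r"
  by (simp add: dim_order_set unfilled_shape_def)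

lemma finite_boxes: "finite (boxes \<mu>)"
  and card_boxes: "card (boxes \<mu>) = sum_list \<mu>"
proof -
  have eq: "boxes \<mu> = Sigma {..<length \<mu>} (\<lambda>r. {..<\<mu> ! r})"
    by (auto simp: boxes_def)
  show "finite (boxes \<mu>)" unfolding eq by simp
  show "card (boxes \<mu>) = sum_list \<mu>"
    unfolding eq by (simp add: sum_list_sum_nth atLeast0LessThan)
qed

lemma unfilled_shape_le:
  "k < length \<mu> \<Longrightarrow> unfilled_shape \<mu> T ! k \<le> \<mu> ! k"
  using card_mono[of "{..<\<mu> ! k}" "{c. c < \<mu> ! k \<and> T (k, c) = 0}"]
  by (auto simp: unfilled_shape_def)

lemma unfilled_shape_eqI:
  assumes "k < length \<mu>" "l \<le> \<mu> ! k" "\<And>c. c < \<mu> ! k \<Longrightarrow> T (k, c) = 0 \<longleftrightarrow> c < l"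
  shows "unfilled_shape \<mu> T ! k = l"
proof -
  have "{c. c < \<mu> ! k \<and> T (k, c) = 0} = {..<l}" using assms by auto
  then show ?thesis using assms(1) by (simp add: unfilled_shape_def)
qed

definition partial_filling :: "nat list \<Rightarrow> nat \<Rightarrow> (nat \<times> nat \<Rightarrow> nat) \<Rightarrow> bool" where
  "partial_filling \<mu> i T \<longleftrightarrow> i \<le> sum_list \<mu> \<and>
     (\<forall>p. T p \<noteq> 0 \<longrightarrow> p \<in> boxes \<mu>) \<and>
     (\<forall>k<length \<mu>. \<forall>c<\<mu> ! k. T (k, c) = 0 \<longleftrightarrow> c < unfilled_shape \<mu> T ! k) \<and>
     bij_betw T {p \<in> boxes \<mu>. T p \<noteq> 0} {Suc i..sum_list \<mu>} \<and>
     (\<forall>r c. (r, Suc c) \<in> boxes \<mu> \<longrightarrow> T (r, c) \<noteq> 0 \<longrightarrow> T (r, c) < T (r, Suc c))"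

lemma partial_filling_root: "partial_filling \<mu> (sum_list \<mu>) (\<lambda>_. 0)"
proof -
  have "unfilled_shape \<mu> (\<lambda>_. 0) ! k = \<mu> ! k" if "k < length \<mu>" for k
    using that by (auto intro: unfilled_shape_eqI)
  then show ?thesis by (auto simp: partial_filling_def bij_betw_def)
qed

lemma partial_filling_filled_gt:
  assumes "partial_filling \<mu> i T" "T q \<noteq> 0"
  shows "i < T q"
proof -
  have "q \<in> boxes \<mu>" using assms unfolding partial_filling_def by blast
  then have "T q \<in> {Suc i..sum_list \<mu>}"
    using assms by (auto simp: partial_filling_def bij_betw_def)
  then show ?thesis by simp
qed

lemma partial_filling_unfilled_iff:
  assumes "partial_filling \<mu> i T" "(k, c) \<in> boxes \<mu>"
  shows "T (k, c) = 0 \<longleftrightarrow> c < unfilled_shape \<mu> T ! k"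
  using assms by (auto simp: partial_filling_def boxes_def)

(* The boxes p whose entries a = T p form a dimension pair (a, b) with a box q carrying b,
   in a partial filling where unfilled boxes count as 0.  At Level 0 this is D^T_b, read off
   as boxes instead of values. *)
definition dim_boxes :: "nat list \<Rightarrow> (nat \<times> nat \<Rightarrow> nat) \<Rightarrow> nat \<Rightarrow> (nat \<times> nat) set" where
  "dim_boxes \<mu> T b = {p \<in> boxes \<mu>. T p < b \<and>
     (\<exists>q\<in>boxes \<mu>. T q = b \<and> ((snd q = snd p \<and> fst p < fst q) \<or> snd q < snd p)) \<and>
     ((fst p, Suc (snd p)) \<in> boxes \<mu> \<longrightarrow> b \<le> T (fst p, Suc (snd p)))}"

lemma mem_dim_boxes:
  "(r, c) \<in> dim_boxes \<mu> T b \<longleftrightarrow> (r, c) \<in> boxes \<mu> \<and> T (r, c) < b \<and>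
     (\<exists>q\<in>boxes \<mu>. T q = b \<and> ((snd q = c \<and> r < fst q) \<or> snd q < c)) \<and>
     ((r, Suc c) \<in> boxes \<mu> \<longrightarrow> b \<le> T (r, Suc c))"
  by (simp add: dim_boxes_def)

lemma dim_boxes_subset: "dim_boxes \<mu> T b \<subseteq> boxes \<mu>"
  by (auto simp: dim_boxes_def)

lemma dim_pairs_with_eq_image: "dim_pairs_with \<mu> T b = T ` dim_boxes \<mu> T b"
  by (auto simp: dim_pairs_with_def dim_boxes_def)

(* Placing a value v < b into an unfilled box does not change the dimension partners of b:
   partners below b behave the same whether they hold 0 or v. *)
lemma dim_boxes_update_unfilled:
  assumes "T p = 0" "v < b"
  shows "dim_boxes \<mu> (T(p := v)) b = dim_boxes \<mu> T b"
proof -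
  have "(T(p := v)) x < b \<longleftrightarrow> T x < b" "(T(p := v)) x = b \<longleftrightarrow> T x = b"
    "b \<le> (T(p := v)) x \<longleftrightarrow> b \<le> T x" for x
    using assms by auto
  then show ?thesis unfolding dim_boxes_def by presburger
qed

(* The box receiving the value i at a Level i vertex when row k is chosen: the rightmost
   unfilled box of row k, i.e. the far-right box of row k of the unfilled composition. *)
abbreviation last_unfilled :: "nat list \<Rightarrow> (nat \<times> nat \<Rightarrow> nat) \<Rightarrow> nat \<Rightarrow> nat \<times> nat" where
  "last_unfilled \<mu> T k \<equiv> (k, unfilled_shape \<mu> T ! k - 1)"

context
  fixes \<mu> :: "nat list" and i :: nat and T :: "nat \<times> nat \<Rightarrow> nat" and k :: nat
  assumes pf: "partial_filling \<mu> (Suc i) T"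
    and k: "k < length \<mu>" "0 < unfilled_shape \<mu> T ! k"
begin

lemma last_unfilled_in_boxes: "last_unfilled \<mu> T k \<in> boxes \<mu>"
  and last_unfilled_empty: "T (last_unfilled \<mu> T k) = 0"
  using k unfilled_shape_le[OF k(1), of T] partial_filling_unfilled_iff[OF pf]
  by (auto simp: boxes_def)

lemma shape_after_place:
  assumes "r < length \<mu>"
  shows "unfilled_shape \<mu> (T(last_unfilled \<mu> T k := Suc i)) ! r =
    (if r = k then unfilled_shape \<mu> T ! k - 1 else unfilled_shape \<mu> T ! r)"
proof (rule unfilled_shape_eqI[OF assms])
  show "(if r = k then unfilled_shape \<mu> T ! k - 1 else unfilled_shape \<mu> T ! r) \<le> \<mu> ! r"
    using unfilled_shape_le[OF assms, of T] by auto
  show "(T(last_unfilled \<mu> T k := Suc i)) (r, c) = 0 \<longleftrightarrow>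
      c < (if r = k then unfilled_shape \<mu> T ! k - 1 else unfilled_shape \<mu> T ! r)"
    if "c < \<mu> ! r" for c
    using partial_filling_unfilled_iff[OF pf, of r c] that assms k(2) by (auto simp: boxes_def)
qed

lemma bij_after_place:
  "bij_betw (T(last_unfilled \<mu> T k := Suc i))
     {p \<in> boxes \<mu>. (T(last_unfilled \<mu> T k := Suc i)) p \<noteq> 0} {Suc i..sum_list \<mu>}"
proof -
  let ?p = "last_unfilled \<mu> T k" and ?n = "sum_list \<mu>"
  let ?F = "{p \<in> boxes \<mu>. T p \<noteq> 0}" and ?T' = "T(last_unfilled \<mu> T k := Suc i)"
  have le: "Suc i \<le> ?n" and bij: "bij_betw T ?F {Suc (Suc i)..?n}"
    using pf by (simp_all add: partial_filling_def)
  have "bij_betw ?T' ?F {Suc (Suc i)..?n}"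
    using bij_betw_cong[of ?F ?T' T] bij last_unfilled_empty by fastforce
  then have "bij_betw ?T' (?F \<union> {?p}) ({Suc (Suc i)..?n} \<union> {?T' ?p})"
    using last_unfilled_empty by (intro notIn_Un_bij_betw) auto
  moreover have "?F \<union> {?p} = {p \<in> boxes \<mu>. ?T' p \<noteq> 0}"
    using last_unfilled_in_boxes last_unfilled_empty by auto
  moreover have "{Suc (Suc i)..?n} \<union> {?T' ?p} = {Suc i..?n}"
    using le by auto
  ultimately show ?thesis by simp
qed

(* ... keeps the rows increasing, since i+1 is smaller than all entries to its right ... *)
lemma rows_after_place:
  assumes rc: "(r, Suc c) \<in> boxes \<mu>" "(T(last_unfilled \<mu> T k := Suc i)) (r, c) \<noteq> 0"
  shows "(T(last_unfilled \<mu> T k := Suc i)) (r, c) < (T(last_unfilled \<mu> T k := Suc i)) (r, Suc c)"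
proof (cases "(r, c) = last_unfilled \<mu> T k")
  case True
  then have "r = k" "Suc c = unfilled_shape \<mu> T ! k" using k(2) by auto
  then have "T (r, Suc c) \<noteq> 0" and "(r, Suc c) \<noteq> last_unfilled \<mu> T k"
    using partial_filling_unfilled_iff[OF pf rc(1)] by auto
  then show ?thesis using True partial_filling_filled_gt[OF pf] by fastforce
next
  case False
  then have "T (r, c) \<noteq> 0" using rc(2) by (metis fun_upd_other)
  moreover have "T (r, c) < T (r, Suc c)" if "T (r, c) \<noteq> 0"
    using pf rc(1) that by (auto simp: partial_filling_def)
  ultimately have "T (r, c) < T (r, Suc c)" and "(r, Suc c) \<noteq> last_unfilled \<mu> T k"
    using last_unfilled_empty by auto
  then show ?thesis using False by (metis fun_upd_other)
qed

lemma partial_filling_place: "partial_filling \<mu> i (T(last_unfilled \<mu> T k := Suc i))"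
proof -
  let ?T' = "T(last_unfilled \<mu> T k := Suc i)"
  have le: "i \<le> sum_list \<mu>" and support: "\<forall>p. T p \<noteq> 0 \<longrightarrow> p \<in> boxes \<mu>"
    using pf by (simp_all add: partial_filling_def)
  have support': "\<forall>p. ?T' p \<noteq> 0 \<longrightarrow> p \<in> boxes \<mu>"
    using support last_unfilled_in_boxes by auto
  have segment': "\<forall>r<length \<mu>. \<forall>c<\<mu> ! r. ?T' (r, c) = 0 \<longleftrightarrow> c < unfilled_shape \<mu> ?T' ! r"
  proof (intro allI impI)
    fix r c assume r: "r < length \<mu>" and c: "c < \<mu> ! r"
    show "?T' (r, c) = 0 \<longleftrightarrow> c < unfilled_shape \<mu> ?T' ! r"
      unfolding shape_after_place[OF r]
      using partial_filling_unfilled_iff[OF pf, of r c] r c k(2) by (auto simp: boxes_def)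
  qed
  show ?thesis unfolding partial_filling_def
    using le support' segment' bij_after_place rows_after_place by blast
qed

(* The new value i+1 is the only entry equal to i+1, and the entries below it are exactly
   the 0s of the other unfilled boxes: everything placed earlier exceeds i+1. *)
lemma placed_value_unique:
  "(T(last_unfilled \<mu> T k := Suc i)) q = Suc i \<Longrightarrow> q = last_unfilled \<mu> T k"
  using partial_filling_filled_gt[OF pf, of q] by (cases "q = last_unfilled \<mu> T k") auto

lemma below_placed_value_iff:
  "(T(last_unfilled \<mu> T k := Suc i)) p < Suc i \<longleftrightarrow> T p = 0 \<and> p \<noteq> last_unfilled \<mu> T k"
  using partial_filling_filled_gt[OF pf, of p]
  by (cases "p = last_unfilled \<mu> T k"; cases "T p = 0") auto

(* A dimension partner of the new value i+1 is the last unfilled box of a row preceding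
   row k in the dimension ordering: it must be unfilled, its right neighbour must not lie
   below i+1, and it must be right of or below the new box. *)
lemma placed_value_partner:
  assumes "(r, c) \<in> dim_boxes \<mu> (T(last_unfilled \<mu> T k := Suc i)) (Suc i)"
  shows "r \<in> set (dim_order (unfilled_shape \<mu> T))" and "dim_before (unfilled_shape \<mu> T) r k"
    and "c = unfilled_shape \<mu> T ! r - 1"
proof -
  let ?u = "unfilled_shape \<mu> T" and ?p = "last_unfilled \<mu> T k"
    and ?T' = "T(last_unfilled \<mu> T k := Suc i)"
  have box: "(r, c) \<in> boxes \<mu>" and small: "?T' (r, c) < Suc i"
    and partner: "\<exists>q\<in>boxes \<mu>. ?T' q = Suc i \<and> ((snd q = c \<and> r < fst q) \<or> snd q < c)"
    and right: "(r, Suc c) \<in> boxes \<mu> \<Longrightarrow> Suc i \<le> ?T' (r, Suc c)"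
    using assms unfolding mem_dim_boxes by blast+
  have partner: "(?u ! k - 1 = c \<and> r < k) \<or> ?u ! k - 1 < c"
  proof -
    from partner obtain q where q: "?T' q = Suc i" "(snd q = c \<and> r < fst q) \<or> snd q < c"
      by blast
    with placed_value_unique[OF q(1)] show ?thesis by simp
  qed
  have r: "r < length \<mu>" using box by (simp add: boxes_def)
  have "T (r, c) = 0" using small below_placed_value_iff by blast
  then have c: "c < ?u ! r" using partial_filling_unfilled_iff[OF pf box] by simp
  then show "r \<in> set (dim_order ?u)" using r by (simp add: mem_dim_order_unfilled_shape)
  show c_last: "c = ?u ! r - 1"
  proof (rule ccontr)
    assume "c \<noteq> ?u ! r - 1"
    then have "Suc c < ?u ! r" using c by linarith
    then have "(r, Suc c) \<in> boxes \<mu>" "T (r, Suc c) = 0"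
      using r unfilled_shape_le[OF r, of T] partial_filling_unfilled_iff[OF pf]
      by (auto simp: boxes_def)
    moreover have "(r, Suc c) \<noteq> ?p" using partner by auto
    ultimately show False using right below_placed_value_iff[of "(r, Suc c)"] by simp
  qed
  show "dim_before ?u r k"
    using partner c c_last k(2) by (auto simp: dim_before_def)
qed

lemma last_unfilled_partner:
  assumes r: "r \<in> set (dim_order (unfilled_shape \<mu> T))"
    and before: "dim_before (unfilled_shape \<mu> T) r k"
  shows "last_unfilled \<mu> T r \<in> dim_boxes \<mu> (T(last_unfilled \<mu> T k := Suc i)) (Suc i)"
proof -
  let ?u = "unfilled_shape \<mu> T" and ?p = "last_unfilled \<mu> T k"
    and ?T' = "T(last_unfilled \<mu> T k := Suc i)"
  have rl: "r < length \<mu>" and rpos: "0 < ?u ! r"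
    using r by (simp_all add: mem_dim_order_unfilled_shape)
  have "r \<noteq> k" using before dim_before_asym by blast
  then have not_new: "(r, ?u ! r - 1) \<noteq> ?p" by simp
  have box: "(r, ?u ! r - 1) \<in> boxes \<mu>" and "T (r, ?u ! r - 1) = 0"
    using rl rpos unfilled_shape_le[OF rl, of T] partial_filling_unfilled_iff[OF pf]
    by (auto simp: boxes_def)
  then have small: "?T' (r, ?u ! r - 1) < Suc i" using below_placed_value_iff not_new by blast
  have "(?u ! k - 1 = ?u ! r - 1 \<and> r < k) \<or> ?u ! k - 1 < ?u ! r - 1"
    using before rpos k(2) by (auto simp: dim_before_def)
  then have partner: "\<exists>q\<in>boxes \<mu>. ?T' q = Suc i \<and>
      ((snd q = ?u ! r - 1 \<and> r < fst q) \<or> snd q < ?u ! r - 1)"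
    using last_unfilled_in_boxes by (intro bexI[of _ ?p]) auto
  have right: "Suc i \<le> ?T' (r, Suc (?u ! r - 1))" if "(r, Suc (?u ! r - 1)) \<in> boxes \<mu>"
    using that rpos partial_filling_unfilled_iff[OF pf that]
      below_placed_value_iff[of "(r, Suc (?u ! r - 1))"] by simp
  show ?thesis
    unfolding mem_dim_boxes using box small partner right by blast
qed

lemma dim_boxes_placed_value:
  "dim_boxes \<mu> (T(last_unfilled \<mu> T k := Suc i)) (Suc i) =
     last_unfilled \<mu> T ` {r \<in> set (dim_order (unfilled_shape \<mu> T)). dim_before (unfilled_shape \<mu> T) r k}"
proof (rule set_eqI, rule iffI)
  fix p assume "p \<in> dim_boxes \<mu> (T(last_unfilled \<mu> T k := Suc i)) (Suc i)"
  moreover obtain r c where "p = (r, c)" by fastforce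
  ultimately show "p \<in> last_unfilled \<mu> T ` {r \<in> set (dim_order (unfilled_shape \<mu> T)).
      dim_before (unfilled_shape \<mu> T) r k}"
    using placed_value_partner by auto
qed (use last_unfilled_partner in auto)

end

(* The exponent vector e of a Level i vertex records, for every value b > i already placed,
   the number of dimension partners of b; by \<open>dim_boxes_update_unfilled\<close> these numbers no
   longer change once b is placed. *)
definition exponents_count_dim_pairs :: "nat list \<Rightarrow> nat \<Rightarrow> (nat \<times> nat \<Rightarrow> nat) \<Rightarrow> (nat \<Rightarrow> nat) \<Rightarrow> bool" where
  "exponents_count_dim_pairs \<mu> i T e \<longleftrightarrow>
     (\<forall>b. e b = (if i < b \<and> b \<le> sum_list \<mu> then card (dim_boxes \<mu> T b) else 0))"

lemma gp_step_row:
  assumes "j < length (dim_order (unfilled_shape \<mu> T))"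
  shows "dim_order (unfilled_shape \<mu> T) ! j < length \<mu>"
    and "0 < unfilled_shape \<mu> T ! (dim_order (unfilled_shape \<mu> T) ! j)"
  using nth_mem[OF assms] by (simp_all add: mem_dim_order_unfilled_shape)

lemma exponents_count_dim_pairs_step:
  assumes pf: "partial_filling \<mu> (Suc i) T" and ex: "exponents_count_dim_pairs \<mu> (Suc i) T e"
    and j: "j < length (dim_order (unfilled_shape \<mu> T))"
    and k: "k = dim_order (unfilled_shape \<mu> T) ! j"
  shows "exponents_count_dim_pairs \<mu> i (T(last_unfilled \<mu> T k := Suc i)) (e(Suc i := j))"
proof -
  let ?T' = "T(last_unfilled \<mu> T k := Suc i)"
  note row = gp_step_row[OF j, folded k]
  have "inj_on (last_unfilled \<mu> T) A" for A by (auto simp: inj_on_def)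
  then have new: "card (dim_boxes \<mu> ?T' (Suc i)) = j"
    unfolding dim_boxes_placed_value[OF pf row]
    using card_dim_before[OF j] by (simp add: card_image k)
  have old: "dim_boxes \<mu> ?T' b = dim_boxes \<mu> T b" if "Suc i < b" for b
    using that last_unfilled_empty[OF pf row] by (intro dim_boxes_update_unfilled) auto
  have "Suc i \<le> sum_list \<mu>" using pf by (simp add: partial_filling_def)
  then show ?thesis
    using ex new old by (auto simp: exponents_count_dim_pairs_def Suc_lessI)
qed

lemma gp_vertex_invariant:
  "gp_vertex \<mu> i T e \<Longrightarrow> partial_filling \<mu> i T \<and> exponents_count_dim_pairs \<mu> i T e"
proof (induction rule: gp_vertex.induct)
  case root
  then show ?case
    using partial_filling_root by (simp add: exponents_count_dim_pairs_def)
next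
  case (step i T e j k)
  then show ?case
    using partial_filling_place[OF _ gp_step_row] exponents_count_dim_pairs_step by blast
qed

lemma partial_filling_level0:
  assumes "partial_filling \<mu> 0 T"
  shows "row_strict \<mu> (sum_list \<mu>) T" and "\<And>p. p \<in> boxes \<mu> \<Longrightarrow> T p \<noteq> 0"
proof -
  have bij: "bij_betw T {p \<in> boxes \<mu>. T p \<noteq> 0} {1..sum_list \<mu>}"
    and rows: "\<forall>r c. (r, Suc c) \<in> boxes \<mu> \<longrightarrow> T (r, c) \<noteq> 0 \<longrightarrow> T (r, c) < T (r, Suc c)"
    using assms by (simp_all add: partial_filling_def)
  then have "card {p \<in> boxes \<mu>. T p \<noteq> 0} = card (boxes \<mu>)"
    by (simp add: bij_betw_same_card card_boxes)
  then have all: "{p \<in> boxes \<mu>. T p \<noteq> 0} = boxes \<mu>"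
    by (intro card_subset_eq[OF finite_boxes]) auto
  then show filled: "\<And>p. p \<in> boxes \<mu> \<Longrightarrow> T p \<noteq> 0" by blast
  show "row_strict \<mu> (sum_list \<mu>) T"
    unfolding row_strict_def using bij all rows filled by simp
qed

lemma Phi_level0:
  assumes pf: "partial_filling \<mu> 0 T" and ex: "exponents_count_dim_pairs \<mu> 0 T e"
  shows "Phi \<mu> (sum_list \<mu>) T = e"
proof
  fix b
  have e: "e b = (if 0 < b \<and> b \<le> sum_list \<mu> then card (dim_boxes \<mu> T b) else 0)"
    using ex by (simp add: exponents_count_dim_pairs_def)
  show "Phi \<mu> (sum_list \<mu>) T b = e b"
  proof (cases "2 \<le> b \<and> b \<le> sum_list \<mu>")
    case True
    have "inj_on T (boxes \<mu>)"
      using partial_filling_level0(1)[OF pf] by (simp add: row_strict_def bij_betw_def)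
    then have "card (T ` dim_boxes \<mu> T b) = card (dim_boxes \<mu> T b)"
      by (intro card_image inj_on_subset[OF _ dim_boxes_subset])
    then show ?thesis using True e by (simp add: Phi_def dim_pairs_with_eq_image)
  next
    case False
    have "dim_boxes \<mu> T 1 = {}"
      using partial_filling_level0(2)[OF pf] dim_boxes_subset
      by (force simp: dim_boxes_def)
    then show ?thesis using False e by (cases "b = 1") (auto simp: Phi_def)
  qed
qed

theorem mainTheorem6:
  fixes \<mu> :: "nat list" and n :: nat and T :: "nat \<times> nat \<Rightarrow> nat" and m :: "nat \<Rightarrow> nat"
  assumes "is_partition \<mu> n"
    and "gp_vertex \<mu> 0 T m"
  shows "row_strict \<mu> n T \<and> (\<forall>m'. gp_leaf \<mu> T m' \<longrightarrow> Phi \<mu> n T = m')"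
proof -
  have n: "n = sum_list \<mu>" using assms(1) by (simp add: is_partition_def)
  have "row_strict \<mu> n T"
    using gp_vertex_invariant[OF assms(2)] partial_filling_level0(1) n by blast
  moreover have "Phi \<mu> n T = m'" if "gp_leaf \<mu> T m'" for m'
    using that gp_vertex_invariant Phi_level0 n unfolding gp_leaf_def by blast
  ultimately show ?thesis by blast
qed

end
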